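(* Let $\Gamma$ be a simple connected graph of order $n$ and let $\mu$ be the algebraic connectivity of $\Gamma$. Then: (1) if $\Gamma$ is 3-regular, then $\mathrm{girth}(\Gamma)\ge \left\lceil\frac{n(\mu-1)}{\mu}\right\rceil$; (2) if $\Gamma$ is 4-regular, then $\mathrm{girth}(\Gamma)\ge \left\lceil\frac{n(\mu-2)}{\mu}\right\rceil$; (3) if $\Gamma$ is 5-regular, then $\mathrm{girth}(\Gamma)\ge \left\lceil\frac{n\mu}{n+\mu}\right\rceil$.
   Context: $\mathrm{girth}(\Gamma)$ is the length of a shortest cycle in $\Gamma$. The algebraic connectivity is the second smallest eigenvalue of the Laplacian matrix of $\Gamma$. *)

theory Defs
  imports "Jordan_Normal_Form.Char_Poly" "HOL-Library.Extended_Nat"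
begin

definition simple_graph :: "nat \<Rightarrow> (nat \<Rightarrow> nat \<Rightarrow> bool) \<Rightarrow> bool" where
  "simple_graph n E \<longleftrightarrow> (\<forall>u v. E u v \<longrightarrow> u < n \<and> v < n) \<and>
     (\<forall>u v. E u v \<longrightarrow> E v u) \<and> (\<forall>u. \<not> E u u)"

definition connected_graph :: "nat \<Rightarrow> (nat \<Rightarrow> nat \<Rightarrow> bool) \<Rightarrow> bool" where
  "connected_graph n E \<longleftrightarrow> (\<forall>u v. u < n \<longrightarrow> v < n \<longrightarrow> E\<^sup>*\<^sup>* u v)"

definition degree :: "nat \<Rightarrow> (nat \<Rightarrow> nat \<Rightarrow> bool) \<Rightarrow> nat \<Rightarrow> nat" where
  "degree n E v = card {u. u < n \<and> E v u}"

definition regular :: "nat \<Rightarrow> (nat \<Rightarrow> nat \<Rightarrow> bool) \<Rightarrow> nat \<Rightarrow> bool" where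
  "regular n E k \<longleftrightarrow> (\<forall>v < n. degree n E v = k)"

definition laplacian :: "nat \<Rightarrow> (nat \<Rightarrow> nat \<Rightarrow> bool) \<Rightarrow> real mat" where
  "laplacian n E = mat n n (\<lambda>(i, j). if i = j then real (degree n E i)
                                   else if E i j then -1 else 0)"

text \<open>Laplacian eigenvalues (with multiplicity), in non-decreasing order: the roots of
  the characteristic polynomial (real, since L is symmetric).\<close>
definition laplacian_eigenvalues :: "nat \<Rightarrow> (nat \<Rightarrow> nat \<Rightarrow> bool) \<Rightarrow> real list" where
  "laplacian_eigenvalues n E = sorted_list_of_multiset (proots (char_poly (laplacian n E)))"

definition algebraic_connectivity :: "nat \<Rightarrow> (nat \<Rightarrow> nat \<Rightarrow> bool) \<Rightarrow> real" where
  "algebraic_connectivity n E = laplacian_eigenvalues n E ! 1"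

definition is_cycle :: "nat \<Rightarrow> (nat \<Rightarrow> nat \<Rightarrow> bool) \<Rightarrow> nat list \<Rightarrow> bool" where
  "is_cycle n E c \<longleftrightarrow> length c \<ge> 3 \<and> distinct c \<and> set c \<subseteq> {..<n} \<and>
     (\<forall>i < length c. E (c ! i) (c ! ((i + 1) mod length c)))"

text \<open>Girth: length of a shortest cycle (infinity if acyclic).\<close>
definition girth :: "nat \<Rightarrow> (nat \<Rightarrow> nat \<Rightarrow> bool) \<Rightarrow> enat" where
  "girth n E = Inf {enat (length c) | c. is_cycle n E c}"

end

theory Submission
  imports Defs
begin

text \<open>
  Let C be a cycle of length g < n in a k-regular graph. Each vertex of C has two neighbours on C,
  hence at most k - 2 outside it, so at most g (k - 2) edges leave C. The vector x that equals
  n - g on C and -g elsewhere is orthogonal to the constant vector, a Laplacian eigenvector for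
  the eigenvalue 0, so by Courant-Fischer the algebraic connectivity mu is at most the Rayleigh
  quotient of x. Its Laplacian form is n^2 times the number of edges leaving C and its squared
  norm is g n (n - g); hence mu (n - g) <= (k - 2) n, which for k = 3, 4, 5 rearranges to the
  three bounds (the last one using g >= 3).

  Courant-Fischer rests on the spectral theorem for real symmetric matrices, obtained by
  deflation: a real eigenvector exists, and a Householder reflection moving it to the first basis
  vector splits off a 1 x 1 block.
\<close>

section \<open>The spectral theorem for real symmetric matrices\<close>

lemma index_mult_mat_sum:
  fixes X Y :: "'a::comm_semiring_0 mat"
  assumes "X \<in> carrier_mat a b" "Y \<in> carrier_mat b c" "i < a" "j < c"
  shows "(X * Y) $$ (i, j) = (\<Sum>p<b. X $$ (i, p) * Y $$ (p, j))"
  using assms by (auto simp: scalar_prod_def lessThan_atLeast0 intro!: sum.cong)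

lemma index_mult_mat_vec_sum:
  fixes A :: "'a::comm_semiring_0 mat"
  assumes "A \<in> carrier_mat n n" "v \<in> carrier_vec n" "i < n"
  shows "(A *\<^sub>v v) $ i = (\<Sum>j<n. A $$ (i, j) * v $ j)"
  using assms by (auto simp: scalar_prod_def lessThan_atLeast0 intro!: sum.cong)

lemma sum_power2_pos:
  fixes x :: "nat \<Rightarrow> real"
  assumes "i < n" "x i \<noteq> 0"
  shows "0 < (\<Sum>j<n. (x j)\<^sup>2)"
  using assms by (intro sum_pos2[of _ i]) auto

lemma householder_reflection_exists:
  fixes u :: "nat \<Rightarrow> real"
  assumes n: "n > 0" and unit: "(\<Sum>i<n. (u i)\<^sup>2) = 1"
  shows "\<exists>H \<in> carrier_mat n n. transpose_mat H = H \<and> H * H = 1\<^sub>m n \<and> (\<forall>i<n. H $$ (i, 0) = u i)"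
proof (cases "u 0 = 1")
  case True
  have "(\<Sum>i<n. (u i)\<^sup>2) = (u 0)\<^sup>2 + (\<Sum>i\<in>{..<n}-{0}. (u i)\<^sup>2)"
    using n by (subst sum.remove[of _ 0]) auto
  then have "\<forall>i\<in>{..<n}-{0}. (u i)\<^sup>2 = 0"
    using True unit by (subst sum_nonneg_eq_0_iff[symmetric]) auto
  then show ?thesis
    using True by (intro bexI[of _ "1\<^sub>m n"]) auto
next
  case False
  \<comment> \<open>the reflection in the hyperplane orthogonal to w = u - e0 swaps e0 and u\<close>
  define w where "w i = u i - (if i = 0 then 1 else 0)" for i
  define s where "s = (\<Sum>i<n. (w i)\<^sup>2)"
  have "s = (\<Sum>i<n. (u i)\<^sup>2 + (if i = 0 then 1 - 2 * u 0 else 0))"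
    unfolding s_def w_def by (intro sum.cong) (auto simp: power2_eq_square algebra_simps)
  also have "\<dots> = 2 - 2 * u 0"
    using n by (simp add: sum.distrib unit)
  finally have s: "s = 2 - 2 * u 0" .
  have "(u 0)\<^sup>2 \<le> 1"
    using unit n member_le_sum[of 0 "{..<n}" "\<lambda>i. (u i)\<^sup>2"] by auto
  then have "u 0 \<le> 1" by (metis abs_le_D1 abs_square_le_1)
  then have s_pos: "s > 0" using False s by auto
  define H where "H = mat n n (\<lambda>(i, j). (if i = j then 1 else 0) - 2 * w i * w j / s)"
  have H: "H \<in> carrier_mat n n" unfolding H_def by simp
  have "(H * H) $$ (i, j) = (if i = j then 1 else 0)" if ij: "i < n" "j < n" for i j
  proof -
    have "(H * H) $$ (i, j) = (\<Sum>p<n. ((if i = p then 1 else 0) - 2 * w i * w p / s) *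
                                      ((if p = j then 1 else 0) - 2 * w p * w j / s))"
      using ij by (subst index_mult_mat_sum[OF H H]) (auto simp: H_def)
    also have "\<dots> = (\<Sum>p<n. (if i = p then 1 else 0) * (if p = j then 1 else 0)
         - (2 * w j / s) * ((if i = p then 1 else 0) * w p)
         - (2 * w i / s) * ((if p = j then 1 else 0) * w p)
         + (4 * w i * w j / s\<^sup>2) * (w p)\<^sup>2)"
      using s_pos by (intro sum.cong) (auto simp: power2_eq_square field_simps)
    also have "\<dots> = (\<Sum>p<n. (if i = p then 1 else 0) * (if p = j then 1 else 0))
         - (2 * w j / s) * (\<Sum>p<n. (if i = p then 1 else 0) * w p)
         - (2 * w i / s) * (\<Sum>p<n. (if p = j then 1 else 0) * w p)
         + (4 * w i * w j / s\<^sup>2) * s"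
      unfolding s_def by (simp only: sum.distrib sum_subtractf sum_distrib_left)
    also have "\<dots> = (if i = j then 1 else 0) - (2 * w j / s) * w i - (2 * w i / s) * w j
                    + (4 * w i * w j / s\<^sup>2) * s"
      using ij by (simp add: if_distrib[of "\<lambda>x. x * _"] cong: if_cong)
    also have "\<dots> = (if i = j then 1 else 0)"
      using s_pos by (simp add: power2_eq_square field_simps)
    finally show ?thesis .
  qed
  then have "H * H = 1\<^sub>m n"
    using H by (intro eq_matI) auto
  moreover have "transpose_mat H = H"
    unfolding H_def by (rule eq_matI) (auto simp: mult_ac)
  moreover have "H $$ (i, 0) = u i" if "i < n" for i
    using that s_pos by (simp add: H_def w_def s field_simps)
  ultimately show ?thesis using H by blast
qed

lemma real_symmetric_has_eigenvalue:
  fixes A :: "real mat"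
  assumes A: "A \<in> carrier_mat n n" and sym: "transpose_mat A = A" and n: "n > 0"
  shows "\<exists>r. eigenvalue A r"
proof -
  define Ac where "Ac = map_mat complex_of_real A"
  have Ac: "Ac \<in> carrier_mat n n" unfolding Ac_def using A by simp
  obtain cs where cs: "char_poly Ac = (\<Prod>a\<leftarrow>cs. [:- a, 1:])" "length cs = n"
    using char_poly_factorized[OF Ac] by blast
  then obtain c where "c \<in> set cs" using n by (cases cs) auto
  then have root: "poly (char_poly Ac) c = 0" unfolding cs(1)
    by (induction cs) auto
  then obtain z where "eigenvector Ac z c"
    using eigenvalue_root_char_poly[OF Ac] unfolding eigenvalue_def by blast
  then have z: "z \<in> carrier_vec n" "z \<noteq> 0\<^sub>v n" and ze: "Ac *\<^sub>v z = c \<cdot>\<^sub>v z"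
    using Ac unfolding eigenvector_def by auto
  \<comment> \<open>the Hermitian form of z is both real and equal to c times the positive real |z|^2\<close>
  define q where "q = (\<Sum>i<n. \<Sum>j<n. cnj (z $ i) * complex_of_real (A $$ (i, j)) * z $ j)"
  define N where "N = (\<Sum>i<n. (cmod (z $ i))\<^sup>2)"
  have row: "(\<Sum>j<n. complex_of_real (A $$ (i, j)) * z $ j) = c * z $ i" if "i < n" for i
  proof -
    have "(Ac *\<^sub>v z) $ i = c * z $ i" using ze that z by simp
    then show ?thesis
      unfolding index_mult_mat_vec_sum[OF Ac z(1) that] using that A by (simp add: Ac_def)
  qed
  have "q = (\<Sum>i<n. cnj (z $ i) * (\<Sum>j<n. complex_of_real (A $$ (i, j)) * z $ j))"
    unfolding q_def by (simp add: sum_distrib_left mult.assoc)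
  also have "\<dots> = (\<Sum>i<n. cnj (z $ i) * (c * z $ i))"
    by (intro sum.cong) (simp_all add: row)
  also have "\<dots> = c * complex_of_real N"
    unfolding N_def of_real_sum
    by (simp add: sum_distrib_left complex_norm_square mult_ac del: of_real_power)
  finally have qN: "q = c * complex_of_real N" .
  have "cnj q = (\<Sum>i<n. \<Sum>j<n. z $ i * complex_of_real (A $$ (i, j)) * cnj (z $ j))"
    unfolding q_def by simp
  also have "\<dots> = (\<Sum>j<n. \<Sum>i<n. z $ i * complex_of_real (A $$ (i, j)) * cnj (z $ j))"
    by (rule sum.swap)
  also have "\<dots> = q"
  proof -
    have "A $$ (i, j) = A $$ (j, i)" if "i < n" "j < n" for i j
      using that A by (subst sym[symmetric]) simp
    then show ?thesis unfolding q_def by (intro sum.cong refl) (simp add: mult_ac)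
  qed
  finally have q_real: "cnj q = q" .
  obtain i where "i < n" "z $ i \<noteq> 0"
    using z by (metis carrier_vecD eq_vecI index_zero_vec)
  then have "N > 0" unfolding N_def
    by (intro sum_pos2[of _ i]) auto
  then have "cnj c = c"
    using q_real unfolding qN by simp
  then have c_real: "c = complex_of_real (Re c)"
    by (metis Reals_cnj_iff complex_is_Real_iff of_real_Re)
  have "poly (char_poly Ac) (complex_of_real (Re c)) = 0"
    using root c_real by simp
  moreover have "char_poly Ac = map_poly complex_of_real (char_poly A)"
    unfolding Ac_def by (rule of_real_hom.char_poly_hom[OF A])
  ultimately have "poly (char_poly A) (Re c) = 0" by simp
  then show ?thesis
    using eigenvalue_root_char_poly[OF A] by blast
qed

definition orthogonal_eigenbasis :: "nat \<Rightarrow> real mat \<Rightarrow> real mat \<Rightarrow> (nat \<Rightarrow> real) \<Rightarrow> bool" where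
  "orthogonal_eigenbasis n A U d \<longleftrightarrow>
     U \<in> carrier_mat n n \<and> transpose_mat U * U = 1\<^sub>m n \<and> A * U = U * mat_diag n d"

lemma symmetric_deflation:
  fixes A :: "real mat"
  assumes A: "A \<in> carrier_mat n n" and sym: "transpose_mat A = A" and n: "n > 0"
  obtains H \<theta> where "H \<in> carrier_mat n n" "transpose_mat H = H" "H * H = 1\<^sub>m n"
    "\<And>i. i < n \<Longrightarrow> (H * A * H) $$ (i, 0) = (if i = 0 then \<theta> else 0)"
proof -
  obtain \<theta> where "eigenvalue A \<theta>"
    using real_symmetric_has_eigenvalue[OF A sym n] ..
  then obtain v where v: "v \<in> carrier_vec n" "v \<noteq> 0\<^sub>v n" and Av: "A *\<^sub>v v = \<theta> \<cdot>\<^sub>v v"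
    using A unfolding eigenvalue_def eigenvector_def by auto
  define r where "r = sqrt (\<Sum>j<n. (v $ j)\<^sup>2)"
  define u where "u i = v $ i / r" for i
  obtain i0 where "i0 < n" "v $ i0 \<noteq> 0"
    using v by (metis carrier_vecD eq_vecI index_zero_vec)
  then have r_pos: "r > 0" unfolding r_def using sum_power2_pos by simp
  have "(\<Sum>i<n. (u i)\<^sup>2) = 1"
    using r_pos unfolding u_def
    by (simp add: power_divide flip: sum_divide_distrib) (simp add: r_def)
  then obtain H where H: "H \<in> carrier_mat n n" and "transpose_mat H = H" and HH: "H * H = 1\<^sub>m n"
    and H0: "\<forall>i<n. H $$ (i, 0) = u i"
    using householder_reflection_exists[OF n] by blast
  have AH0: "(A * H) $$ (q, 0) = \<theta> * H $$ (q, 0)" if q: "q < n" for q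
  proof -
    have "(A *\<^sub>v v) $ q = \<theta> * v $ q" using Av q v by simp
    then have "(\<Sum>p<n. A $$ (q, p) * v $ p) = \<theta> * v $ q"
      by (simp only: index_mult_mat_vec_sum[OF A v(1) q])
    then have "(\<Sum>p<n. A $$ (q, p) * u p) = \<theta> * u q"
      unfolding u_def by (simp add: sum_divide_distrib[symmetric])
    then show ?thesis
      using q n H0 by (simp add: index_mult_mat_sum[OF A H])
  qed
  have "(H * A * H) $$ (i, 0) = (if i = 0 then \<theta> else 0)" if i: "i < n" for i
  proof -
    have AH: "A * H \<in> carrier_mat n n" using A H by simp
    have "(H * A * H) $$ (i, 0) = (H * (A * H)) $$ (i, 0)" using A H by simp
    also have "\<dots> = (\<Sum>q<n. H $$ (i, q) * (A * H) $$ (q, 0))"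
      using n by (intro index_mult_mat_sum[OF H AH i]) simp
    also have "\<dots> = \<theta> * (H * H) $$ (i, 0)"
      using i n by (simp add: AH0 index_mult_mat_sum[OF H H] sum_distrib_left mult_ac)
    finally show ?thesis using HH i n by simp
  qed
  then show ?thesis using that H \<open>transpose_mat H = H\<close> HH by blast
qed

lemma orthogonal_eigenbasis_block_diag:
  assumes B: "B \<in> carrier_mat m m" and "orthogonal_eigenbasis m B V e"
  shows "orthogonal_eigenbasis (Suc m)
           (four_block_mat (mat 1 1 (\<lambda>_. \<theta>)) (0\<^sub>m 1 m) (0\<^sub>m m 1) B)
           (four_block_mat (1\<^sub>m 1) (0\<^sub>m 1 m) (0\<^sub>m m 1) V)
           (\<lambda>k. if k = 0 then \<theta> else e (k - 1))"
proof -
  have V: "V \<in> carrier_mat m m" and VV: "transpose_mat V * V = 1\<^sub>m m"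
    and BV: "B * V = V * mat_diag m e"
    using assms unfolding orthogonal_eigenbasis_def by auto
  define T where "T = mat 1 1 (\<lambda>_. \<theta>)"
  define U where "U = four_block_mat (1\<^sub>m 1) (0\<^sub>m 1 m) (0\<^sub>m m 1) V"
  have blocks: "1\<^sub>m 1 \<in> carrier_mat 1 1" "0\<^sub>m 1 m \<in> carrier_mat 1 m" "0\<^sub>m m 1 \<in> carrier_mat m 1"
    "T \<in> carrier_mat 1 1" "transpose_mat V \<in> carrier_mat m m" "mat_diag m e \<in> carrier_mat m m"
    using V unfolding T_def by auto
  have "transpose_mat U * U = four_block_mat (1\<^sub>m 1) (0\<^sub>m 1 m) (0\<^sub>m m 1) (transpose_mat V * V)"
    unfolding U_def transpose_four_block_mat[OF blocks(1-3) V] transpose_one zero_transpose_mat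
      mult_four_block_mat[OF blocks(1-3,5) blocks(1-3) V]
    using V by simp
  moreover have "four_block_mat T (0\<^sub>m 1 m) (0\<^sub>m m 1) B * U
      = four_block_mat T (0\<^sub>m 1 m) (0\<^sub>m m 1) (B * V)"
    unfolding U_def mult_four_block_mat[OF blocks(4,2,3) B blocks(1-3) V] using V B blocks by simp
  moreover have "U * four_block_mat T (0\<^sub>m 1 m) (0\<^sub>m m 1) (mat_diag m e)
      = four_block_mat T (0\<^sub>m 1 m) (0\<^sub>m m 1) (V * mat_diag m e)"
    unfolding U_def mult_four_block_mat[OF blocks(1-3) V blocks(4,2,3,6)]
    using V blocks by (simp add: left_mult_zero_mat[OF blocks(6)])
  moreover have "mat_diag (Suc m) (\<lambda>k. if k = 0 then \<theta> else e (k - 1))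
      = four_block_mat T (0\<^sub>m 1 m) (0\<^sub>m m 1) (mat_diag m e)"
    unfolding T_def by (rule eq_matI) (auto simp: mat_diag_def)
  moreover have "U \<in> carrier_mat (Suc m) (Suc m)"
    using four_block_carrier_mat[OF blocks(1) V] unfolding U_def by simp
  ultimately show ?thesis
    using VV BV unfolding orthogonal_eigenbasis_def T_def U_def by simp
qed

lemma orthogonal_eigenbasis_conjugate:
  fixes A H :: "real mat"
  assumes A: "A \<in> carrier_mat n n" and H: "H \<in> carrier_mat n n"
    and "transpose_mat H = H" and HH: "H * H = 1\<^sub>m n"
    and "orthogonal_eigenbasis n (H * A * H) U d"
  shows "orthogonal_eigenbasis n A (H * U) d"
proof -
  have U: "U \<in> carrier_mat n n" and UU: "transpose_mat U * U = 1\<^sub>m n"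
    and AU: "H * A * H * U = U * mat_diag n d"
    using assms unfolding orthogonal_eigenbasis_def by auto
  have "transpose_mat (H * U) * (H * U) = transpose_mat U * ((H * H) * U)"
    using H U \<open>transpose_mat H = H\<close> by (simp add: transpose_mult assoc_mult_mat[of _ n n _ n _ n])
  then have "transpose_mat (H * U) * (H * U) = 1\<^sub>m n" using U UU HH by simp
  moreover have "H * (H * A * H * U) = A * (H * U)"
  proof -
    have "H * (H * A * H * U) = (H * H) * A * H * U"
      using A H U by (simp add: assoc_mult_mat[of _ n n _ n _ n])
    then show ?thesis using A H U HH by simp
  qed
  ultimately show ?thesis
    using H U AU unfolding orthogonal_eigenbasis_def by (simp add: assoc_mult_mat[OF H U, of _ n])
qed

theorem real_symmetric_orthogonal_eigenbasis:
  fixes A :: "real mat"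
  assumes "A \<in> carrier_mat n n" "transpose_mat A = A"
  shows "\<exists>U d. orthogonal_eigenbasis n A U d"
  using assms
proof (induction n arbitrary: A)
  case 0
  then have "orthogonal_eigenbasis 0 A (1\<^sub>m 0) (\<lambda>_. 0)"
    unfolding orthogonal_eigenbasis_def by (auto intro!: eq_matI simp: mat_diag_def)
  then show ?case by blast
next
  case (Suc m)
  obtain H \<theta> where H: "H \<in> carrier_mat (Suc m) (Suc m)" and Hs: "transpose_mat H = H"
    and HH: "H * H = 1\<^sub>m (Suc m)"
    and col0: "\<And>i. i < Suc m \<Longrightarrow> (H * A * H) $$ (i, 0) = (if i = 0 then \<theta> else 0)"
    using symmetric_deflation[OF Suc.prems] by blast
  define A' where "A' = H * A * H"
  have A': "A' \<in> carrier_mat (Suc m) (Suc m)"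
    unfolding A'_def using H Suc.prems(1) by simp
  have "transpose_mat A' = transpose_mat H * transpose_mat (H * A)"
    unfolding A'_def using H Suc.prems(1) by (intro transpose_mult) auto
  also have "\<dots> = H * (A * H)"
    using H Suc.prems by (simp add: transpose_mult[OF H Suc.prems(1)] Hs)
  finally have "transpose_mat A' = A'"
    unfolding A'_def using H Suc.prems(1) by simp
  then have A'_sym: "A' $$ (i, j) = A' $$ (j, i)" if "i < Suc m" "j < Suc m" for i j
    using that A' by (metis carrier_matD index_transpose_mat(1))
  define B where "B = mat m m (\<lambda>(i, j). A' $$ (Suc i, Suc j))"
  have B: "B \<in> carrier_mat m m" unfolding B_def by simp
  have "transpose_mat B = B"
    unfolding B_def by (rule eq_matI) (auto intro: A'_sym)
  then obtain V e where "orthogonal_eigenbasis m B V e"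
    using Suc.IH[OF B] by blast
  moreover have "A' = four_block_mat (mat 1 1 (\<lambda>_. \<theta>)) (0\<^sub>m 1 m) (0\<^sub>m m 1) B"
  proof (rule eq_matI)
    fix i j assume "i < dim_row (four_block_mat (mat 1 1 (\<lambda>_. \<theta>)) (0\<^sub>m 1 m) (0\<^sub>m m 1) B)"
      "j < dim_col (four_block_mat (mat 1 1 (\<lambda>_. \<theta>)) (0\<^sub>m 1 m) (0\<^sub>m m 1) B)"
    then have "i < Suc m" "j < Suc m" using B by auto
    then show "A' $$ (i, j) = four_block_mat (mat 1 1 (\<lambda>_. \<theta>)) (0\<^sub>m 1 m) (0\<^sub>m m 1) B $$ (i, j)"
      using B col0[folded A'_def] A'_sym[of 0 j]
      by (cases i; cases j) (auto simp: B_def)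
  qed (use A' B in auto)
  ultimately have "\<exists>U d. orthogonal_eigenbasis (Suc m) A' U d"
    using orthogonal_eigenbasis_block_diag[OF B] by metis
  then show ?case
    using orthogonal_eigenbasis_conjugate[OF Suc.prems(1) H Hs HH] unfolding A'_def by blast
qed

lemma proots_prod_linear: "proots (\<Prod>a\<leftarrow>xs. [:- a, 1:]) = mset (xs :: real list)"
proof (induction xs)
  case (Cons a xs)
  have "(\<Prod>a\<leftarrow>xs. [:- a, 1:]) \<noteq> (0 :: real poly)"
    by (auto simp: prod_list_zero_iff)
  then have "proots ([:- a, 1:] * (\<Prod>a\<leftarrow>xs. [:- a, 1:]))
      = proots [:- a, 1:] + proots (\<Prod>a\<leftarrow>xs. [:- a, 1:])"
    by (intro proots_mult) auto
  then show ?case using Cons by simp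
qed simp

lemma orthogonal_eigenbasis_eigenvalues:
  fixes A :: "real mat"
  assumes A: "A \<in> carrier_mat n n" and "orthogonal_eigenbasis n A U d"
  shows "sorted_list_of_multiset (proots (char_poly A)) = sort (map d [0..<n])"
proof -
  have U: "U \<in> carrier_mat n n" and UU: "transpose_mat U * U = 1\<^sub>m n"
    and AU: "A * U = U * mat_diag n d"
    using assms unfolding orthogonal_eigenbasis_def by auto
  have Ut: "transpose_mat U \<in> carrier_mat n n" using U by simp
  have UUt: "U * transpose_mat U = 1\<^sub>m n"
    by (rule mat_mult_left_right_inverse[OF Ut U UU])
  have "A = A * (U * transpose_mat U)" unfolding UUt using A by simp
  also have "\<dots> = U * mat_diag n d * transpose_mat U"
    using A U Ut by (simp flip: AU)
  finally have "similar_mat_wit A (mat_diag n d) U (transpose_mat U)"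
    unfolding similar_mat_wit_def Let_def using A U Ut UU UUt by auto
  then have "char_poly A = char_poly (mat_diag n d)"
    by (intro char_poly_similar) (auto simp: similar_mat_def)
  also have "\<dots> = (\<Prod>a\<leftarrow>diag_mat (mat_diag n d). [:- a, 1:])"
    by (rule char_poly_upper_triangular[OF mat_diag_dim])
      (auto simp: upper_triangular_def mat_diag_def)
  also have "diag_mat (mat_diag n d) = map d [0..<n]"
    unfolding diag_mat_def mat_diag_def by (intro nth_equalityI) auto
  finally show ?thesis
    by (simp only: proots_prod_linear sorted_list_of_multiset_mset)
qed

lemma orthogonal_eigenbasis_sums:
  fixes A :: "real mat"
  assumes A: "A \<in> carrier_mat n n" and "orthogonal_eigenbasis n A U d"
  shows "\<And>i j. i < n \<Longrightarrow> j < n \<Longrightarrow> (\<Sum>k<n. U $$ (i, k) * U $$ (j, k)) = (if i = j then 1 else 0)"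
    and "\<And>k. k < n \<Longrightarrow> (\<Sum>i<n. (U $$ (i, k))\<^sup>2) = 1"
    and "\<And>i k. i < n \<Longrightarrow> k < n \<Longrightarrow> (\<Sum>j<n. A $$ (i, j) * U $$ (j, k)) = d k * U $$ (i, k)"
proof -
  have U: "U \<in> carrier_mat n n" and UU: "transpose_mat U * U = 1\<^sub>m n"
    and AU: "A * U = U * mat_diag n d"
    using assms unfolding orthogonal_eigenbasis_def by auto
  have Ut: "transpose_mat U \<in> carrier_mat n n" using U by simp
  have UUt: "U * transpose_mat U = 1\<^sub>m n"
    by (rule mat_mult_left_right_inverse[OF Ut U UU])
  show "(\<Sum>k<n. U $$ (i, k) * U $$ (j, k)) = (if i = j then 1 else 0)" if "i < n" "j < n" for i j
  proof -
    have "(U * transpose_mat U) $$ (i, j) = (\<Sum>k<n. U $$ (i, k) * U $$ (j, k))"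
      using that U by (subst index_mult_mat_sum[OF U Ut]) auto
    then show ?thesis using UUt that by simp
  qed
  show "(\<Sum>i<n. (U $$ (i, k))\<^sup>2) = 1" if "k < n" for k
  proof -
    have "(transpose_mat U * U) $$ (k, k) = (\<Sum>i<n. (U $$ (i, k))\<^sup>2)"
      using that U by (subst index_mult_mat_sum[OF Ut U]) (auto simp: power2_eq_square)
    then show ?thesis using UU that by simp
  qed
  show "(\<Sum>j<n. A $$ (i, j) * U $$ (j, k)) = d k * U $$ (i, k)" if "i < n" "k < n" for i k
  proof -
    have "(A * U) $$ (i, k) = (\<Sum>j<n. A $$ (i, j) * U $$ (j, k))"
      using that by (rule index_mult_mat_sum[OF A U])
    then show ?thesis using AU that U by (simp add: mat_diag_mult_right mult.commute)
  qed
qed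

section \<open>A Courant-Fischer bound\<close>

definition quadratic_form :: "nat \<Rightarrow> (nat \<Rightarrow> nat \<Rightarrow> real) \<Rightarrow> (nat \<Rightarrow> real) \<Rightarrow> real" where
  "quadratic_form n A x = (\<Sum>i<n. x i * (\<Sum>j<n. A i j * x j))"

lemma orthonormal_eigenbasis_expansion:
  fixes A U :: "nat \<Rightarrow> nat \<Rightarrow> real" and d w :: "nat \<Rightarrow> real"
  assumes rows: "\<And>i j. i < n \<Longrightarrow> j < n \<Longrightarrow> (\<Sum>k<n. U i k * U j k) = (if i = j then 1 else 0)"
    and eig: "\<And>i k. i < n \<Longrightarrow> k < n \<Longrightarrow> (\<Sum>j<n. A i j * U j k) = d k * U i k"
  defines "c \<equiv> \<lambda>k. \<Sum>i<n. w i * U i k"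
  shows "\<And>i. i < n \<Longrightarrow> w i = (\<Sum>k<n. c k * U i k)"
    and "quadratic_form n A w = (\<Sum>k<n. d k * (c k)\<^sup>2)"
    and "(\<Sum>i<n. (w i)\<^sup>2) = (\<Sum>k<n. (c k)\<^sup>2)"
proof -
  show expand: "w i = (\<Sum>k<n. c k * U i k)" if i: "i < n" for i
  proof -
    have "(\<Sum>k<n. c k * U i k) = (\<Sum>k<n. \<Sum>j<n. w j * (U j k * U i k))"
      unfolding c_def by (simp add: sum_distrib_right sum_distrib_left mult_ac)
    also have "\<dots> = (\<Sum>j<n. w j * (\<Sum>k<n. U j k * U i k))"
      by (subst sum.swap) (simp add: sum_distrib_left)
    also have "\<dots> = (\<Sum>j<n. if j = i then w i else 0)"
      using rows i by (intro sum.cong) auto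
    also have "\<dots> = w i" using i by simp
    finally show ?thesis by simp
  qed
  have Aw: "(\<Sum>j<n. A i j * w j) = (\<Sum>k<n. c k * d k * U i k)" if i: "i < n" for i
  proof -
    have "(\<Sum>j<n. A i j * w j) = (\<Sum>j<n. A i j * (\<Sum>k<n. c k * U j k))"
      using expand by (intro sum.cong) auto
    also have "\<dots> = (\<Sum>k<n. c k * (\<Sum>j<n. A i j * U j k))"
      by (simp add: sum_distrib_left mult_ac) (subst sum.swap, simp)
    also have "\<dots> = (\<Sum>k<n. c k * d k * U i k)"
      using eig i by (intro sum.cong) auto
    finally show ?thesis .
  qed
  have "quadratic_form n A w = (\<Sum>i<n. w i * (\<Sum>k<n. c k * d k * U i k))"
    unfolding quadratic_form_def using Aw by (intro sum.cong) auto
  also have "\<dots> = (\<Sum>k<n. c k * d k * (\<Sum>i<n. w i * U i k))"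
    by (simp add: sum_distrib_left mult_ac) (subst sum.swap, simp)
  also have "\<dots> = (\<Sum>k<n. d k * (c k)\<^sup>2)"
    unfolding c_def by (simp add: power2_eq_square mult_ac)
  finally show "quadratic_form n A w = (\<Sum>k<n. d k * (c k)\<^sup>2)" .
  have "(\<Sum>i<n. (w i)\<^sup>2) = (\<Sum>i<n. w i * (\<Sum>k<n. c k * U i k))"
    using expand by (intro sum.cong) (auto simp: power2_eq_square)
  also have "\<dots> = (\<Sum>k<n. c k * (\<Sum>i<n. w i * U i k))"
    by (simp add: sum_distrib_left mult_ac) (subst sum.swap, simp)
  also have "\<dots> = (\<Sum>k<n. (c k)\<^sup>2)"
    unfolding c_def by (simp add: power2_eq_square mult_ac)
  finally show "(\<Sum>i<n. (w i)\<^sup>2) = (\<Sum>k<n. (c k)\<^sup>2)" .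
qed

lemma quadratic_form_gt_if_orthogonal_to_eigenvector:
  fixes A U :: "nat \<Rightarrow> nat \<Rightarrow> real" and d w :: "nat \<Rightarrow> real"
  assumes rows: "\<And>i j. i < n \<Longrightarrow> j < n \<Longrightarrow> (\<Sum>k<n. U i k * U j k) = (if i = j then 1 else 0)"
    and eig: "\<And>i k. i < n \<Longrightarrow> k < n \<Longrightarrow> (\<Sum>j<n. A i j * U j k) = d k * U i k"
    and large: "\<And>k. k < n \<Longrightarrow> k \<noteq> k0 \<Longrightarrow> \<rho> < d k"
    and orth: "(\<Sum>i<n. w i * U i k0) = 0" and nonzero: "i0 < n" "w i0 \<noteq> 0"
  shows "\<rho> * (\<Sum>i<n. (w i)\<^sup>2) < quadratic_form n A w"
proof -
  define c where "c k = (\<Sum>i<n. w i * U i k)" for k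
  note expansion = orthonormal_eigenbasis_expansion[OF rows eig, where w = w, folded c_def]
  obtain k where k: "k < n" "c k \<noteq> 0"
    using nonzero expansion(1)[of i0]
    by (metis (no_types, lifting) lessThan_iff mult_eq_0_iff sum.neutral)
  have "k \<noteq> k0" using k orth unfolding c_def by auto
  have "0 < (\<Sum>k<n. (d k - \<rho>) * (c k)\<^sup>2)"
  proof (rule sum_pos2[of _ k])
    show "0 < (d k - \<rho>) * (c k)\<^sup>2" using k large \<open>k \<noteq> k0\<close> by simp
    show "0 \<le> (d l - \<rho>) * (c l)\<^sup>2" if "l \<in> {..<n}" for l
      using that large[of l] orth unfolding c_def by (cases "l = k0") auto
  qed (use k in auto)
  also have "\<dots> = quadratic_form n A w - \<rho> * (\<Sum>i<n. (w i)\<^sup>2)"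
    by (simp add: expansion(2,3) left_diff_distrib sum_subtractf sum_distrib_left)
  finally show ?thesis by simp
qed

lemma quadratic_form_kernel_combination:
  fixes A :: "nat \<Rightarrow> nat \<Rightarrow> real" and a x :: "nat \<Rightarrow> real"
  assumes sym: "\<And>i j. i < n \<Longrightarrow> j < n \<Longrightarrow> A i j = A j i"
    and kernel: "\<And>i. i < n \<Longrightarrow> (\<Sum>j<n. A i j * a j) = 0"
    and orth: "(\<Sum>i<n. a i * x i) = 0"
  shows "quadratic_form n A (\<lambda>i. s * a i + t * x i) = t\<^sup>2 * quadratic_form n A x"
    and "(\<Sum>i<n. (s * a i + t * x i)\<^sup>2) = s\<^sup>2 * (\<Sum>i<n. (a i)\<^sup>2) + t\<^sup>2 * (\<Sum>i<n. (x i)\<^sup>2)"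
proof -
  have Acomb: "(\<Sum>j<n. A i j * (s * a j + t * x j)) = t * (\<Sum>j<n. A i j * x j)" if "i < n" for i
  proof -
    have "(\<Sum>j<n. A i j * (s * a j + t * x j)) = s * (\<Sum>j<n. A i j * a j) + t * (\<Sum>j<n. A i j * x j)"
      by (simp add: algebra_simps sum.distrib sum_distrib_left)
    then show ?thesis using kernel[OF that] by simp
  qed
  have "(\<Sum>i<n. a i * (\<Sum>j<n. A i j * x j)) = (\<Sum>j<n. x j * (\<Sum>i<n. A j i * a i))"
    by (simp add: sum_distrib_left mult_ac) (subst sum.swap, use sym in \<open>auto intro!: sum.cong\<close>)
  also have "\<dots> = 0" using kernel by simp
  finally have cross: "(\<Sum>i<n. a i * (\<Sum>j<n. A i j * x j)) = 0" .
  have "quadratic_form n A (\<lambda>i. s * a i + t * x i)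
      = (\<Sum>i<n. (s * a i + t * x i) * (t * (\<Sum>j<n. A i j * x j)))"
    unfolding quadratic_form_def by (intro sum.cong) (simp_all add: Acomb)
  also have "\<dots> = s * t * (\<Sum>i<n. a i * (\<Sum>j<n. A i j * x j)) + t\<^sup>2 * quadratic_form n A x"
    unfolding quadratic_form_def
    by (simp add: power2_eq_square algebra_simps sum.distrib sum_distrib_left)
  finally show "quadratic_form n A (\<lambda>i. s * a i + t * x i) = t\<^sup>2 * quadratic_form n A x"
    using cross by simp
  have "(\<Sum>i<n. (s * a i + t * x i)\<^sup>2)
      = s\<^sup>2 * (\<Sum>i<n. (a i)\<^sup>2) + 2 * s * t * (\<Sum>i<n. a i * x i) + t\<^sup>2 * (\<Sum>i<n. (x i)\<^sup>2)"
    by (simp add: power2_eq_square algebra_simps sum.distrib sum_distrib_left)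
  then show "(\<Sum>i<n. (s * a i + t * x i)\<^sup>2) = s\<^sup>2 * (\<Sum>i<n. (a i)\<^sup>2) + t\<^sup>2 * (\<Sum>i<n. (x i)\<^sup>2)"
    using orth by simp
qed

lemma orthogonal_combination_nonzero:
  fixes a x :: "nat \<Rightarrow> real"
  assumes orth: "(\<Sum>i<n. a i * x i) = 0" and st: "(s, t) \<noteq> (0, 0)"
    and a: "ia < n" "a ia \<noteq> 0" and x: "ix < n" "x ix \<noteq> 0"
  shows "\<exists>i<n. s * a i + t * x i \<noteq> 0"
proof (rule ccontr)
  assume "\<not> ?thesis"
  then have zero: "\<And>i. i < n \<Longrightarrow> s * a i + t * x i = 0" by auto
  have "(\<Sum>i<n. (s * a i + t * x i) * a i) = s * (\<Sum>i<n. (a i)\<^sup>2) + t * (\<Sum>i<n. a i * x i)"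
    by (simp add: algebra_simps power2_eq_square sum.distrib sum_distrib_left)
  then have "s * (\<Sum>i<n. (a i)\<^sup>2) = (\<Sum>i<n. (s * a i + t * x i) * a i)"
    using orth by simp
  also have "\<dots> = 0" using zero by simp
  finally have "s = 0" using sum_power2_pos[where x = a, OF a] by simp
  have "(\<Sum>i<n. (s * a i + t * x i) * x i) = s * (\<Sum>i<n. a i * x i) + t * (\<Sum>i<n. (x i)\<^sup>2)"
    by (simp add: algebra_simps power2_eq_square sum.distrib sum_distrib_left)
  then have "t * (\<Sum>i<n. (x i)\<^sup>2) = (\<Sum>i<n. (s * a i + t * x i) * x i)"
    using orth by simp
  also have "\<dots> = 0" using zero by simp
  finally have "t = 0" using sum_power2_pos[where x = x, OF x] by simp
  with \<open>s = 0\<close> st show False by simp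
qed

lemma two_eigenvalues_le_rayleigh_bound:
  fixes A U :: "nat \<Rightarrow> nat \<Rightarrow> real" and d a x :: "nat \<Rightarrow> real"
  assumes sym: "\<And>i j. i < n \<Longrightarrow> j < n \<Longrightarrow> A i j = A j i"
    and rows: "\<And>i j. i < n \<Longrightarrow> j < n \<Longrightarrow> (\<Sum>k<n. U i k * U j k) = (if i = j then 1 else 0)"
    and eig: "\<And>i k. i < n \<Longrightarrow> k < n \<Longrightarrow> (\<Sum>j<n. A i j * U j k) = d k * U i k"
    and kernel: "\<And>i. i < n \<Longrightarrow> (\<Sum>j<n. A i j * a j) = 0" and a: "ia < n" "a ia \<noteq> 0"
    and orth: "(\<Sum>i<n. a i * x i) = 0" and x: "ix < n" "x ix \<noteq> 0"
    and \<rho>: "0 \<le> \<rho>" and bound: "quadratic_form n A x \<le> \<rho> * (\<Sum>i<n. (x i)\<^sup>2)"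
  shows "2 \<le> card {k. k < n \<and> d k \<le> \<rho>}"
proof (rule ccontr)
  assume "\<not> ?thesis"
  then have "\<forall>k\<in>{k. k < n \<and> d k \<le> \<rho>}. \<forall>l\<in>{k. k < n \<and> d k \<le> \<rho>}. k = l"
    by (subst card_le_Suc0_iff_eq[symmetric]) auto
  then obtain k0 where large: "\<And>k. k < n \<Longrightarrow> k \<noteq> k0 \<Longrightarrow> \<rho> < d k"
    by (metis (mono_tags, lifting) mem_Collect_eq not_le)
  \<comment> \<open>a nonzero vector in the span of a and x orthogonal to the k0-th eigenvector\<close>
  define ca where "ca = (\<Sum>i<n. a i * U i k0)"
  define cx where "cx = (\<Sum>i<n. x i * U i k0)"
  obtain s t where st: "(s, t) \<noteq> (0, 0)" and "s * ca + t * cx = 0"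
  proof (cases "ca = 0 \<and> cx = 0")
    case True
    then show ?thesis using that[of 1 0] by simp
  next
    case False
    then show ?thesis using that[of cx "- ca"] by (auto simp: mult.commute)
  qed
  then have "(\<Sum>i<n. (s * a i + t * x i) * U i k0) = 0"
    unfolding ca_def cx_def by (simp add: algebra_simps sum.distrib sum_distrib_left)
  moreover obtain i0 where "i0 < n" "s * a i0 + t * x i0 \<noteq> 0"
    using orthogonal_combination_nonzero[OF orth st a x] by blast
  ultimately have "\<rho> * (\<Sum>i<n. (s * a i + t * x i)\<^sup>2) < quadratic_form n A (\<lambda>i. s * a i + t * x i)"
    by (intro quadratic_form_gt_if_orthogonal_to_eigenvector[OF rows eig large]) auto
  moreover have "quadratic_form n A (\<lambda>i. s * a i + t * x i) \<le> \<rho> * (\<Sum>i<n. (s * a i + t * x i)\<^sup>2)"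
  proof -
    have "t\<^sup>2 * quadratic_form n A x \<le> t\<^sup>2 * (\<rho> * (\<Sum>i<n. (x i)\<^sup>2))"
      using bound by (intro mult_left_mono) auto
    moreover have "0 \<le> s\<^sup>2 * (\<rho> * (\<Sum>i<n. (a i)\<^sup>2))"
      using \<rho> by (intro mult_nonneg_nonneg sum_nonneg) auto
    ultimately show ?thesis
      using quadratic_form_kernel_combination[OF sym kernel orth, of s t]
      by (simp add: algebra_simps)
  qed
  ultimately show False by simp
qed

section \<open>The Laplacian and the algebraic connectivity\<close>

lemma laplacian_carrier: "laplacian n E \<in> carrier_mat n n"
  unfolding laplacian_def by simp

lemma index_laplacian:
  "i < n \<Longrightarrow> j < n \<Longrightarrow>
    laplacian n E $$ (i, j) = (if i = j then real (degree n E i) else if E i j then -1 else 0)"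
  unfolding laplacian_def by simp

lemma laplacian_symmetric:
  assumes "simple_graph n E"
  shows "transpose_mat (laplacian n E) = laplacian n E"
  using assms unfolding simple_graph_def
  by (intro eq_matI) (auto simp: index_laplacian laplacian_carrier[THEN carrier_matD(1)]
      laplacian_carrier[THEN carrier_matD(2)])

lemma real_card_eq_sum: "real (card {j. j < (n::nat) \<and> P j}) = (\<Sum>j<n. if P j then 1 else 0)"
proof -
  have "{j. j < n \<and> P j} = {j \<in> {..<n}. P j}" by auto
  then have "real (card {j. j < n \<and> P j}) = (\<Sum>j \<in> {j \<in> {..<n}. P j}. 1)" by simp
  also have "\<dots> = (\<Sum>j<n. if P j then 1 else 0)" by (rule sum.inter_filter) simp
  finally show ?thesis .
qed

lemma laplacian_mult_sum:
  assumes "simple_graph n E" and i: "i < n"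
  shows "(\<Sum>j<n. laplacian n E $$ (i, j) * x j) = (\<Sum>j<n. if E i j then x i - x j else 0)"
proof -
  have "\<not> E i i" using assms(1) unfolding simple_graph_def by auto
  then have "(\<Sum>j<n. laplacian n E $$ (i, j) * x j)
      = (\<Sum>j<n. (if j = i then real (degree n E i) * x i else 0) - (if E i j then x j else 0))"
    using i by (intro sum.cong) (auto simp: index_laplacian)
  also have "\<dots> = real (degree n E i) * x i - (\<Sum>j<n. if E i j then x j else 0)"
    using i by (simp add: sum_subtractf)
  also have "real (degree n E i) * x i = (\<Sum>j<n. if E i j then x i else 0)"
    unfolding degree_def real_card_eq_sum sum_distrib_right by (intro sum.cong) auto
  also have "\<dots> - (\<Sum>j<n. if E i j then x j else 0) = (\<Sum>j<n. if E i j then x i - x j else 0)"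
    by (subst sum_subtractf[symmetric]) (auto intro: sum.cong)
  finally show ?thesis .
qed

lemma laplacian_kernel_one:
  assumes "simple_graph n E" and "i < n"
  shows "(\<Sum>j<n. laplacian n E $$ (i, j) * 1) = 0"
  by (simp only: laplacian_mult_sum[OF assms] diff_self if_cancel sum.neutral_const)

lemma laplacian_quadratic_form:
  assumes sg: "simple_graph n E"
  shows "quadratic_form n (\<lambda>i j. laplacian n E $$ (i, j)) x
    = (\<Sum>i<n. \<Sum>j<n. if E i j then (x i - x j)\<^sup>2 else 0) / 2"
proof -
  have sym: "E i j = E j i" for i j using sg unfolding simple_graph_def by auto
  define S where "S = (\<Sum>i<n. \<Sum>j<n. if E i j then x i * (x i - x j) else 0)"
  have Q: "quadratic_form n (\<lambda>i j. laplacian n E $$ (i, j)) x = S"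
    unfolding quadratic_form_def S_def
    by (intro sum.cong refl)
      (simp add: laplacian_mult_sum[OF sg] sum_distrib_left if_distrib[of "\<lambda>v. _ * v"]
        cong: if_cong)
  have "S = (\<Sum>j<n. \<Sum>i<n. if E i j then x i * (x i - x j) else 0)"
    unfolding S_def by (rule sum.swap)
  also have "\<dots> = (\<Sum>i<n. \<Sum>j<n. if E i j then x j * (x j - x i) else 0)"
    using sym by (intro sum.cong refl) auto
  finally have S': "S = (\<Sum>i<n. \<Sum>j<n. if E i j then x j * (x j - x i) else 0)" .
  have "(\<Sum>i<n. \<Sum>j<n. if E i j then (x i - x j)\<^sup>2 else 0)
      = (\<Sum>i<n. \<Sum>j<n. (if E i j then x i * (x i - x j) else 0)
                        + (if E i j then x j * (x j - x i) else 0))"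
    by (intro sum.cong refl) (simp add: power2_eq_square algebra_simps)
  also have "\<dots> = 2 * S"
    unfolding sum.distrib by (simp flip: S_def S')
  finally show ?thesis using Q by simp
qed

lemma laplacian_quadratic_form_nonneg:
  assumes "simple_graph n E"
  shows "0 \<le> quadratic_form n (\<lambda>i j. laplacian n E $$ (i, j)) x"
  unfolding laplacian_quadratic_form[OF assms] by (intro divide_nonneg_pos sum_nonneg) auto

lemma laplacian_eigenbasis:
  assumes sg: "simple_graph n E"
  obtains U d where
    "\<And>i j. i < n \<Longrightarrow> j < n \<Longrightarrow> (\<Sum>k<n. U i k * U j k) = (if i = j then 1 else 0)"
    "\<And>i k. i < n \<Longrightarrow> k < n \<Longrightarrow> (\<Sum>j<n. laplacian n E $$ (i, j) * U j k) = d k * U i k"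
    "\<And>k. k < n \<Longrightarrow> 0 \<le> d k"
    "laplacian_eigenvalues n E = sort (map d [0..<n])"
proof -
  obtain U d where B: "orthogonal_eigenbasis n (laplacian n E) U d"
    using real_symmetric_orthogonal_eigenbasis[OF laplacian_carrier laplacian_symmetric[OF sg]]
    by blast
  note sums = orthogonal_eigenbasis_sums[OF laplacian_carrier B]
  have "0 \<le> d k" if k: "k < n" for k
  proof -
    have "quadratic_form n (\<lambda>i j. laplacian n E $$ (i, j)) (\<lambda>i. U $$ (i, k))
        = (\<Sum>i<n. d k * (U $$ (i, k))\<^sup>2)"
      unfolding quadratic_form_def using k
      by (intro sum.cong) (simp_all add: sums(3) power2_eq_square)
    also have "\<dots> = d k" using sums(2)[OF k] by (simp flip: sum_distrib_left)
    finally show ?thesis using laplacian_quadratic_form_nonneg[OF sg] by metis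
  qed
  moreover have "laplacian_eigenvalues n E = sort (map d [0..<n])"
    unfolding laplacian_eigenvalues_def
    by (rule orthogonal_eigenbasis_eigenvalues[OF laplacian_carrier B])
  ultimately show ?thesis
    using that[of "\<lambda>i k. U $$ (i, k)" d] sums(1,3) by blast
qed

lemma sorted_nth_1_le:
  fixes xs :: "'a::linorder list"
  assumes "sorted xs" and "2 \<le> length (filter (\<lambda>y. y \<le> r) xs)"
  shows "xs ! 1 \<le> r"
proof (rule ccontr)
  assume "\<not> xs ! 1 \<le> r"
  have "2 \<le> length xs" using assms(2) length_filter_le order_trans by blast
  then obtain a b ys where xs: "xs = a # b # ys"
    by (metis Suc_le_length_iff numeral_2_eq_2)
  then have "\<forall>y\<in>set ys. r < y"
    using assms(1) \<open>\<not> xs ! 1 \<le> r\<close> by auto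
  then have "filter (\<lambda>y. y \<le> r) ys = []"
    by (auto simp: filter_empty_conv not_le)
  then have "length (filter (\<lambda>y. y \<le> r) xs) \<le> 1"
    using \<open>\<not> xs ! 1 \<le> r\<close> xs by simp
  then show False using assms(2) by simp
qed

lemma length_filter_sort_map: "length (filter P (sort (map d [0..<n]))) = card {k. k < n \<and> P (d k)}"
proof -
  have "length (filter P (sort (map d [0..<n]))) = length (filter P (map d [0..<n]))"
    by (simp add: filter_sort)
  also have "\<dots> = card {k. k < n \<and> P (d k)}"
    unfolding length_filter_conv_card by (intro arg_cong[where f = card]) auto
  finally show ?thesis .
qed

lemma algebraic_connectivity_nonneg:
  assumes "simple_graph n E" and "2 \<le> n"
  shows "0 \<le> algebraic_connectivity n E"
proof -
  obtain U d where "\<And>i j. i < n \<Longrightarrow> j < n \<Longrightarrow> (\<Sum>k<n. U i k * U j k) = (if i = j then 1 else 0)"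
    and "\<And>i k. i < n \<Longrightarrow> k < n \<Longrightarrow> (\<Sum>j<n. laplacian n E $$ (i, j) * U j k) = d k * U i k"
    and d: "\<And>k. k < n \<Longrightarrow> 0 \<le> d k" and ev: "laplacian_eigenvalues n E = sort (map d [0..<n])"
    by (rule laplacian_eigenbasis[OF assms(1)]) (rule that)
  have "laplacian_eigenvalues n E ! 1 \<in> set (laplacian_eigenvalues n E)"
    using assms(2) unfolding ev by (intro nth_mem) simp
  then show ?thesis
    unfolding algebraic_connectivity_def ev using d by auto
qed

lemma algebraic_connectivity_le_rayleigh_quotient:
  assumes sg: "simple_graph n E" and orth: "(\<Sum>i<n. x i) = 0" and x: "i0 < n" "x i0 \<noteq> 0"
    and \<rho>: "0 \<le> \<rho>"
    and bound: "quadratic_form n (\<lambda>i j. laplacian n E $$ (i, j)) x \<le> \<rho> * (\<Sum>i<n. (x i)\<^sup>2)"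
  shows "algebraic_connectivity n E \<le> \<rho>"
proof -
  obtain U d where rows: "\<And>i j. i < n \<Longrightarrow> j < n \<Longrightarrow> (\<Sum>k<n. U i k * U j k) = (if i = j then 1 else 0)"
    and eig: "\<And>i k. i < n \<Longrightarrow> k < n \<Longrightarrow> (\<Sum>j<n. laplacian n E $$ (i, j) * U j k) = d k * U i k"
    and "\<And>k. k < n \<Longrightarrow> 0 \<le> d k" and ev: "laplacian_eigenvalues n E = sort (map d [0..<n])"
    by (rule laplacian_eigenbasis[OF sg]) (rule that)
  have sym: "laplacian n E $$ (i, j) = laplacian n E $$ (j, i)" if "i < n" "j < n" for i j
    using that laplacian_symmetric[OF sg] laplacian_carrier[of n E]
    by (metis carrier_matD index_transpose_mat(1))
  have "(\<Sum>i<n. 1 * x i) = 0" using orth by simp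
  then have "2 \<le> card {k. k < n \<and> d k \<le> \<rho>}"
    using two_eigenvalues_le_rayleigh_bound[where a = "\<lambda>_. 1", OF sym rows eig
        laplacian_kernel_one[OF sg] x(1) _ _ x \<rho> bound]
    by simp
  then have "2 \<le> length (filter (\<lambda>y. y \<le> \<rho>) (laplacian_eigenvalues n E))"
    unfolding ev length_filter_sort_map .
  then show ?thesis
    unfolding algebraic_connectivity_def ev by (intro sorted_nth_1_le) auto
qed

section \<open>Cycles and girth\<close>

lemma sum_if_mem_split:
  fixes f h :: "nat \<Rightarrow> real"
  assumes "S \<subseteq> {..<n}"
  shows "(\<Sum>i<n. if i \<in> S then f i else h i) = (\<Sum>i\<in>S. f i) + (\<Sum>i\<in>{..<n} - S. h i)"
proof -
  have "{..<n} \<inter> {i. i \<in> S} = S" "{..<n} \<inter> - {i. i \<in> S} = {..<n} - S"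
    using assms by auto
  then show ?thesis by (simp add: sum.If_cases)
qed

lemma cut_vector_rayleigh_bound:
  assumes sg: "simple_graph n E" and S: "S \<subseteq> {..<n}" and g: "card S = g" "g < n"
    and cut: "\<And>i. i \<in> S \<Longrightarrow> card {j. j < n \<and> E i j \<and> j \<notin> S} \<le> m"
  defines "x \<equiv> \<lambda>i. if i \<in> S then real n - real g else - real g"
  shows "(\<Sum>i<n. x i) = 0"
    and "quadratic_form n (\<lambda>i j. laplacian n E $$ (i, j)) x
          \<le> real m * real n / (real n - real g) * (\<Sum>i<n. (x i)\<^sup>2)"
proof -
  have sym: "E i j = E j i" for i j using sg unfolding simple_graph_def by auto
  have card_rest: "card ({..<n} - S) = n - g"
    using S g by (simp add: card_Diff_subset finite_subset)
  show "(\<Sum>i<n. x i) = 0"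
    unfolding x_def sum_if_mem_split[OF S] using g card_rest by (simp add: algebra_simps)
  have "(\<Sum>i<n. (x i)\<^sup>2) = (\<Sum>i<n. if i \<in> S then (real n - real g)\<^sup>2 else (real g)\<^sup>2)"
    unfolding x_def by (intro sum.cong) auto
  also have "\<dots> = real g * (real n - real g) * real n"
    unfolding sum_if_mem_split[OF S] using g card_rest by (simp add: power2_eq_square algebra_simps)
  finally have norm: "(\<Sum>i<n. (x i)\<^sup>2) = real g * (real n - real g) * real n" .
  define out where "out = (\<Sum>i<n. \<Sum>j<n. if E i j \<and> i \<in> S \<and> j \<notin> S then (1::real) else 0)"
  have "(\<Sum>i<n. \<Sum>j<n. if E i j \<and> i \<notin> S \<and> j \<in> S then (1::real) else 0)
      = (\<Sum>j<n. \<Sum>i<n. if E i j \<and> i \<notin> S \<and> j \<in> S then (1::real) else 0)"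
    by (rule sum.swap)
  also have "\<dots> = out" unfolding out_def using sym by (intro sum.cong refl) auto
  finally have into: "(\<Sum>i<n. \<Sum>j<n. if E i j \<and> i \<notin> S \<and> j \<in> S then (1::real) else 0) = out" .
  have "(\<Sum>i<n. \<Sum>j<n. if E i j then (x i - x j)\<^sup>2 else 0)
      = (\<Sum>i<n. \<Sum>j<n. (real n)\<^sup>2 * (if E i j \<and> i \<in> S \<and> j \<notin> S then 1 else 0)
                        + (real n)\<^sup>2 * (if E i j \<and> i \<notin> S \<and> j \<in> S then 1 else 0))"
    unfolding x_def by (intro sum.cong refl) (auto simp: power2_eq_square algebra_simps)
  also have "\<dots> = 2 * (real n)\<^sup>2 * out"
    by (simp add: sum.distrib into flip: sum_distrib_left out_def)
  finally have quad: "quadratic_form n (\<lambda>i j. laplacian n E $$ (i, j)) x = (real n)\<^sup>2 * out"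
    unfolding laplacian_quadratic_form[OF sg] by simp
  have "out = (\<Sum>i<n. if i \<in> S then real (card {j. j < n \<and> E i j \<and> j \<notin> S}) else 0)"
    unfolding out_def by (intro sum.cong refl) (auto simp: real_card_eq_sum)
  also have "\<dots> \<le> (\<Sum>i<n. if i \<in> S then real m else 0)"
    using cut by (intro sum_mono) auto
  also have "\<dots> = real g * real m"
    unfolding sum_if_mem_split[OF S] using g by simp
  finally have "(real n)\<^sup>2 * out \<le> (real n)\<^sup>2 * (real g * real m)"
    by (intro mult_left_mono) auto
  also have "\<dots> = real m * real n / (real n - real g) * (\<Sum>i<n. (x i)\<^sup>2)"
    unfolding norm using g by (simp add: power2_eq_square field_simps)
  finally show "quadratic_form n (\<lambda>i j. laplacian n E $$ (i, j)) x
      \<le> real m * real n / (real n - real g) * (\<Sum>i<n. (x i)\<^sup>2)"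
    unfolding quad .
qed

lemma is_cycle_length_le: "is_cycle n E c \<Longrightarrow> length c \<le> n"
  unfolding is_cycle_def by (metis card_lessThan card_mono distinct_card finite_lessThan)

lemma cycle_vertex_two_cycle_neighbours:
  assumes sg: "simple_graph n E" and cyc: "is_cycle n E c" and v: "v \<in> set c"
  obtains p q where "p \<noteq> q" "p \<in> set c" "q \<in> set c" "E v p" "E v q"
proof -
  define g where "g = length c"
  have g3: "3 \<le> g" and dist: "distinct c"
    and adj: "\<And>t. t < g \<Longrightarrow> E (c ! t) (c ! ((t + 1) mod g))"
    using cyc unfolding is_cycle_def g_def by auto
  obtain t where t: "t < g" "v = c ! t" using v unfolding g_def by (metis in_set_conv_nth)
  define ip where "ip = (t + 1) mod g"
  define iq where "iq = (if t = 0 then g - 1 else t - 1)"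
  have ip: "ip < g" and iq: "iq < g" and "(iq + 1) mod g = t"
    using t g3 unfolding ip_def iq_def by auto
  have "ip \<noteq> iq"
    using t g3 unfolding ip_def iq_def by (auto simp: mod_if)
  then have "c ! ip \<noteq> c ! iq"
    using dist ip iq unfolding g_def by (simp add: nth_eq_iff_index_eq)
  moreover have "E v (c ! ip)" "E v (c ! iq)"
    using adj[OF t(1)] adj[OF iq] sg \<open>(iq + 1) mod g = t\<close> t(2)
    unfolding ip_def simple_graph_def by auto
  ultimately show ?thesis
    using that ip iq unfolding g_def by auto
qed

lemma regular_cycle_external_degree:
  assumes sg: "simple_graph n E" and reg: "regular n E k" and cyc: "is_cycle n E c"
    and v: "v \<in> set c"
  shows "card {j. j < n \<and> E v j \<and> j \<notin> set c} \<le> k - 2" and "2 \<le> k"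
proof -
  obtain p q where pq: "p \<noteq> q" "p \<in> set c" "q \<in> set c" "E v p" "E v q"
    using cycle_vertex_two_cycle_neighbours[OF sg cyc v] .
  have "v < n" "p < n" "q < n"
    using pq(4,5) sg unfolding simple_graph_def by auto
  then have nbrs: "card {j. j < n \<and> E v j} = k" and sub: "{p, q} \<subseteq> {j. j < n \<and> E v j}"
    using reg pq unfolding regular_def degree_def by auto
  then show "2 \<le> k"
    using card_mono[OF _ sub] pq(1) by simp
  have "card {j. j < n \<and> E v j \<and> j \<notin> set c} \<le> card ({j. j < n \<and> E v j} - {p, q})"
    using pq by (intro card_mono) auto
  also have "\<dots> = k - 2"
    using card_Diff_subset[OF _ sub] nbrs pq(1) by simp
  finally show "card {j. j < n \<and> E v j \<and> j \<notin> set c} \<le> k - 2" .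
qed

lemma algebraic_connectivity_cycle_bound:
  assumes sg: "simple_graph n E" and reg: "regular n E k" and cyc: "is_cycle n E c"
  shows "algebraic_connectivity n E * (real n - real (length c)) \<le> (real k - 2) * real n"
proof -
  define g where "g = length c"
  have g3: "3 \<le> g" and sub: "set c \<subseteq> {..<n}" and card: "card (set c) = g"
    using cyc distinct_card unfolding is_cycle_def g_def by auto
  have "g \<le> n" using is_cycle_length_le[OF cyc] unfolding g_def .
  have c0: "c ! 0 \<in> set c" using g3 unfolding g_def by (intro nth_mem) linarith
  note k2 = regular_cycle_external_degree(2)[OF sg reg cyc c0]
  show ?thesis
  proof (cases "g = n")
    case True
    then show ?thesis using k2 unfolding g_def by simp
  next
    case False
    then have gn: "g < n" using \<open>g \<le> n\<close> by simp
    define \<rho> where "\<rho> = real (k - 2) * real n / (real n - real g)"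
    define x where "x i = (if i \<in> set c then real n - real g else - real g)" for i
    note rayleigh = cut_vector_rayleigh_bound[OF sg sub card gn
        regular_cycle_external_degree(1)[OF sg reg cyc], folded x_def \<rho>_def]
    have "c ! 0 < n" "x (c ! 0) \<noteq> 0"
      using c0 sub gn unfolding x_def by auto
    then have "algebraic_connectivity n E \<le> \<rho>"
      using rayleigh gn unfolding \<rho>_def
      by (intro algebraic_connectivity_le_rayleigh_quotient[OF sg]) auto
    then have "algebraic_connectivity n E * (real n - real g) \<le> \<rho> * (real n - real g)"
      using gn by (intro mult_right_mono) auto
    also have "\<dots> = (real k - 2) * real n"
      using gn k2 unfolding \<rho>_def by simp
    finally show ?thesis unfolding g_def .
  qed
qed

lemma girth_ge_ceiling:
  assumes "\<And>c. is_cycle n E c \<Longrightarrow> B \<le> real (length c)"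
  shows "enat (nat \<lceil>B\<rceil>) \<le> girth n E"
  unfolding girth_def
proof (rule Inf_greatest)
  fix y assume "y \<in> {enat (length c) |c. is_cycle n E c}"
  then obtain c where "y = enat (length c)" "is_cycle n E c" by blast
  then show "enat (nat \<lceil>B\<rceil>) \<le> y" using assms by (simp add: nat_le_iff ceiling_le_iff)
qed

theorem theorem5:
  fixes n :: nat and E :: "nat \<Rightarrow> nat \<Rightarrow> bool"
  assumes "simple_graph n E" and "connected_graph n E"
  defines "\<mu> \<equiv> algebraic_connectivity n E"
  shows "(regular n E 3 \<longrightarrow> girth n E \<ge> enat (nat \<lceil>real n * (\<mu> - 1) / \<mu>\<rceil>)) \<and>
         (regular n E 4 \<longrightarrow> girth n E \<ge> enat (nat \<lceil>real n * (\<mu> - 2) / \<mu>\<rceil>)) \<and>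
         (regular n E 5 \<longrightarrow> girth n E \<ge> enat (nat \<lceil>real n * \<mu> / (real n + \<mu>)\<rceil>))"
proof -
  have cycle: "0 \<le> \<mu> \<and> \<mu> * (real n - real (length c)) \<le> (real k - 2) * real n \<and> 3 \<le> length c"
    if "regular n E k" "is_cycle n E c" for k c
  proof -
    have "3 \<le> length c" "length c \<le> n"
      using that(2) is_cycle_length_le unfolding is_cycle_def by auto
    then show ?thesis
      using algebraic_connectivity_nonneg[OF assms(1)]
        algebraic_connectivity_cycle_bound[OF assms(1) that]
      unfolding \<mu>_def by auto
  qed
  have ratio: "real n * (\<mu> - r) / \<mu> \<le> g"
    if "0 \<le> \<mu>" "\<mu> * (real n - g) \<le> r * real n" "0 \<le> g" for r g
    using that by (cases "\<mu> = 0") (auto simp: field_simps)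
  have five: "real n * \<mu> / (real n + \<mu>) \<le> g"
    if "0 \<le> \<mu>" "\<mu> * (real n - g) \<le> 3 * real n" "3 \<le> g" for g
  proof -
    have "3 * real n \<le> g * real n" using that(3) by (intro mult_right_mono) auto
    then show ?thesis using that by (cases "real n + \<mu> = 0") (auto simp: field_simps)
  qed
  show ?thesis
    by (intro conjI impI girth_ge_ceiling) (auto dest!: cycle intro!: ratio five)
qed

end
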